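(* Let $p$ be a prime, $k \geq 3$ an integer, $N = p^{2k}$, and let $d$ be odd. In the coefficient-choosing game of degree $d$ over $\mathbb{Z}/N\mathbb{Z}$, Wanda has a winning strategy (whether she moves first or second).
   Context: The coefficient-choosing game of degree $d$ over $R = \mathbb{Z}/N\mathbb{Z}$: Nora and Wanda alternately choose coefficients of $f(x) = a_d x^d + \cdots + a_0$; on each move the current player picks a not-yet-chosen coefficient and assigns it a value in $R$, subject to $a_d \neq 0$, $a_0 \neq 0$. After all $d+1$ coefficients are chosen, Wanda wins if $f$ has a root in $R$, and Nora wins otherwise. *)

theory Defs
  imports Main "HOL-Number_Theory.Number_Theory"
begin

text \<open>Residues are represented by
integers in {0..<N}. A position is a partial assignment s :: nat => int option of the
coefficients a_0,...,a_d (indices > d are ignored).\<close>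

definition legal_move :: "nat \<Rightarrow> nat \<Rightarrow> nat \<Rightarrow> int \<Rightarrow> bool" where
  "legal_move N d i v \<longleftrightarrow> i \<le> d \<and> v \<in> {0..<int N} \<and> ((i = 0 \<or> i = d) \<longrightarrow> v \<noteq> 0)"

definition complete_pos :: "nat \<Rightarrow> (nat \<Rightarrow> int option) \<Rightarrow> bool" where
  "complete_pos d s \<longleftrightarrow> (\<forall>i\<le>d. s i \<noteq> None)"

definition has_root_mod :: "nat \<Rightarrow> nat \<Rightarrow> (nat \<Rightarrow> int option) \<Rightarrow> bool" where
  "has_root_mod N d s \<longleftrightarrow>
     (\<exists>x \<in> {0..<int N}. (\<Sum>i\<le>d. the (s i) * x ^ i) mod int N = 0)"

text \<open>wanda_wins N d wanda_to_move s: Wanda has a winning strategy from position s,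
where the flag tells whether it is Wanda's turn. Least fixed point = winning within
the (finite) game.\<close>
inductive wanda_wins :: "nat \<Rightarrow> nat \<Rightarrow> bool \<Rightarrow> (nat \<Rightarrow> int option) \<Rightarrow> bool"
  for N d where
  terminal: "complete_pos d s \<Longrightarrow> has_root_mod N d s \<Longrightarrow> wanda_wins N d t s"
| wanda_move: "\<not> complete_pos d s \<Longrightarrow> s i = None \<Longrightarrow> legal_move N d i v \<Longrightarrow>
     wanda_wins N d False (s(i := Some v)) \<Longrightarrow> wanda_wins N d True s"
| nora_move: "\<not> complete_pos d s \<Longrightarrow>
     (\<And>i v. s i = None \<Longrightarrow> legal_move N d i v \<Longrightarrow> wanda_wins N d True (s(i := Some v))) \<Longrightarrow>
     wanda_wins N d False s"

end

(*
  Moving second, Wanda answers every move of Nora by writing the same value into the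
  partner coefficient, where a_0 is paired with a_d and a_(2j-1) with a_(2j). Partners
  have indices of opposite parity, so the final polynomial vanishes at x = -1.

  Moving first, Wanda plays a_0 = M := p^(2k-1). For d = 1, Nora's a_1 is not divisible
  by p^(2k), so M + a_1 x = 0 is solvable mod p^(2k). Otherwise Wanda takes care of a_1
  and a_2: if a_1 is still free she sets a_1 = 1; once Nora has chosen a_1 = a she
  answers a_2 = p r with r = -(1 + a div p^k) mod p. If p^k does not divide a, solve
  a y = -p^(k-1) (mod p^k): then x = p^k y is a root, since M + a x = p^k (p^(k-1) + a y)
  and every higher term is divisible by p^(2k). If a = p^k b, then x = p^(k-1) gives
  M + a x + a_2 x^2 = M (1 + b + r), which is divisible by p M = p^(2k), and the terms of
  degree at least 3 vanish because 3(k-1) >= 2k. Either way the root exists whatever the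
  remaining coefficients are.
*)
theory Submission
  imports Defs
begin

lemma has_root_modI:
  fixes x :: int
  assumes "N > 0" and "[(\<Sum>i\<le>d. the (s i) * x ^ i) = 0] (mod int N)"
  shows "has_root_mod N d s"
proof -
  have "[(\<Sum>i\<le>d. the (s i) * (x mod int N) ^ i) = (\<Sum>i\<le>d. the (s i) * x ^ i)] (mod int N)"
    by (intro cong_sum cong_mult cong_pow cong_refl) (simp add: cong_def)
  also note assms(2)
  finally show ?thesis
    unfolding has_root_mod_def using assms(1)
    by (intro bexI[of _ "x mod int N"]) (auto simp: cong_def)
qed

lemma sum_powers_cong_truncate:
  fixes x n :: "'a::unique_euclidean_ring"
  assumes "m \<le> d" and "\<And>i. m < i \<Longrightarrow> n dvd x ^ i"
  shows "[(\<Sum>i\<le>d. c i * x ^ i) = (\<Sum>i\<le>m. c i * x ^ i)] (mod n)"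
  using assms(1)
proof (induction d rule: dec_induct)
  case (step j)
  have "[c (Suc j) * x ^ Suc j = 0] (mod n)"
    using assms(2)[of "Suc j"] step(1) by (simp add: cong_0_iff)
  with step(3) show ?case
    using cong_add by fastforce
qed simp

lemma alternating_sum_eq_0_if_involution:
  fixes c :: "nat \<Rightarrow> 'a::linordered_idom"
  assumes "\<And>i. i \<le> d \<Longrightarrow> \<sigma> i \<le> d" and "\<And>i. i \<le> d \<Longrightarrow> \<sigma> (\<sigma> i) = i"
    and "\<And>i. i \<le> d \<Longrightarrow> odd (\<sigma> i) \<longleftrightarrow> even i" and "\<And>i. i \<le> d \<Longrightarrow> c (\<sigma> i) = c i"
  shows "(\<Sum>i\<le>d. c i * (-1) ^ i) = 0"
proof -
  have "(\<Sum>i\<le>d. c i * (-1) ^ i) = (\<Sum>i\<le>d. c (\<sigma> i) * (-1) ^ \<sigma> i)"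
    by (rule sum.reindex_bij_witness[where i = \<sigma> and j = \<sigma>]) (use assms in auto)
  also have "\<dots> = - (\<Sum>i\<le>d. c i * (-1) ^ i)"
    unfolding sum_negf[symmetric]
    by (rule sum.cong) (use assms(3,4) in \<open>auto simp: minus_one_power_iff\<close>)
  finally show ?thesis
    by simp
qed

lemma linear_cong_prime_power_solvable:
  fixes P a :: int
  assumes "prime P" and "K \<ge> 1" and "\<not> P ^ K dvd a"
  shows "\<exists>y. [P ^ (K - 1) + a * y = 0] (mod P ^ K)"
proof -
  obtain m where "m \<le> K" and m: "normalize (gcd a (P ^ K)) = P ^ m"
    using divides_primepow[OF assms(1), of "gcd a (P ^ K)" K] by auto
  moreover have "m \<noteq> K"
    using m assms(3) by (metis gcd_dvd1 normalize_gcd)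
  ultimately have "gcd a (P ^ K) dvd - (P ^ (K - 1))"
    using m by (simp add: le_imp_power_dvd)
  then obtain y where "[a * y = - (P ^ (K - 1))] (mod P ^ K)"
    using cong_solve_dvd_int by blast
  then have "[P ^ (K - 1) + a * y = P ^ (K - 1) + - (P ^ (K - 1))] (mod P ^ K)"
    by (intro cong_add cong_refl)
  then show ?thesis
    by auto
qed

lemma exists_root_if_not_dvd_linear_coeff:
  fixes P :: int and c :: "nat \<Rightarrow> int"
  assumes "prime P" and "k \<ge> 1" and "d \<ge> 1"
    and "c 0 = P ^ (2 * k - 1)" and "\<not> P ^ k dvd c 1"
  shows "\<exists>x. [(\<Sum>i\<le>d. c i * x ^ i) = 0] (mod P ^ (2 * k))"
proof -
  obtain y where y: "[P ^ (k - 1) + c 1 * y = 0] (mod P ^ k)"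
    using linear_cong_prime_power_solvable assms(1,2,5) by blast
  define x where "x = P ^ k * y"
  have "[(\<Sum>i\<le>d. c i * x ^ i) = (\<Sum>i\<le>1. c i * x ^ i)] (mod P ^ (2 * k))"
  proof (rule sum_powers_cong_truncate[OF assms(3)])
    fix i :: nat
    assume "1 < i"
    then have "P ^ (2 * k) dvd P ^ (k * i)"
      by (intro le_imp_power_dvd) simp
    then show "P ^ (2 * k) dvd x ^ i"
      unfolding x_def power_mult_distrib power_mult by simp
  qed
  also have "(\<Sum>i\<le>1. c i * x ^ i) = P ^ k * (P ^ (k - 1) + c 1 * y)"
  proof -
    have "2 * k - 1 = k + (k - 1)"
      using assms(2) by simp
    then show ?thesis
      using assms(4) by (simp add: x_def algebra_simps power_add)
  qed
  also have "[P ^ k * (P ^ (k - 1) + c 1 * y) = 0] (mod P ^ (2 * k))"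
    using cong_cmult_leftI[OF y, of "P ^ k"] by (simp add: mult_2 power_add)
  finally show ?thesis
    by blast
qed

lemma root_if_dvd_linear_coeff:
  fixes P b :: int and c :: "nat \<Rightarrow> int"
  assumes "k \<ge> 3" and "d \<ge> 2" and "c 0 = P ^ (2 * k - 1)" and "c 1 = P ^ k * b"
    and "c 2 = P * (- (1 + b) mod P)"
  shows "[(\<Sum>i\<le>d. c i * (P ^ (k - 1)) ^ i) = 0] (mod P ^ (2 * k))"
proof -
  define x where "x = P ^ (k - 1)"
  define r where "r = - (1 + b) mod P"
  have "[(\<Sum>i\<le>d. c i * x ^ i) = (\<Sum>i\<le>2. c i * x ^ i)] (mod P ^ (2 * k))"
  proof (rule sum_powers_cong_truncate[OF assms(2)])
    fix i :: nat
    assume "2 < i"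
    then have "(k - 1) * 3 \<le> (k - 1) * i"
      by (intro mult_le_mono2) simp
    then have "2 * k \<le> (k - 1) * i"
      using assms(1) by linarith
    then show "P ^ (2 * k) dvd x ^ i"
      unfolding x_def power_mult[symmetric] by (rule le_imp_power_dvd)
  qed
  also have "(\<Sum>i\<le>2. c i * x ^ i) = P ^ (2 * k - 1) * (1 + b + r)"
  proof -
    have "k + (k - 1) = 2 * k - 1" and "Suc ((k - 1) * 2) = 2 * k - 1"
      using assms(1) by simp_all
    then have "P ^ k * x = P ^ (2 * k - 1)" and "P * x ^ 2 = P ^ (2 * k - 1)"
      unfolding x_def by (metis power_add, metis power_Suc power_mult)
    moreover have "(\<Sum>i\<le>2. c i * x ^ i) = P ^ (2 * k - 1) + b * (P ^ k * x) + r * (P * x ^ 2)"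
      using assms(3-5) unfolding r_def by (simp add: eval_nat_numeral atMost_Suc ac_simps)
    ultimately show ?thesis
      by (simp add: algebra_simps)
  qed
  also have "[P ^ (2 * k - 1) * (1 + b + r) = 0] (mod P ^ (2 * k))"
  proof -
    have "P dvd 1 + b + r"
      unfolding r_def by (simp add: mod_eq_0_iff_dvd[symmetric] mod_add_right_eq)
    then have "P ^ (2 * k - 1) * P dvd P ^ (2 * k - 1) * (1 + b + r)"
      by (rule mult_dvd_mono[OF dvd_refl])
    moreover have "P ^ (2 * k - 1) * P = P ^ (2 * k)"
      using assms(1) by (simp flip: power_Suc2)
    ultimately show ?thesis
      by (metis cong_0_iff)
  qed
  finally show ?thesis
    unfolding x_def .
qed

lemma wanda_wins_by_move:
  assumes "s i = None" and "legal_move N d i v" and "wanda_wins N d False (s(i := Some v))"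
  shows "wanda_wins N d True s"
proof (rule wanda_wins.wanda_move[OF _ assms])
  show "\<not> complete_pos d s"
    using assms(1,2) by (auto simp: complete_pos_def legal_move_def)
qed

lemma wanda_wins_by_invariant:
  assumes root: "\<And>t s. Q t s \<Longrightarrow> complete_pos d s \<Longrightarrow> has_root_mod N d s"
    and wanda: "\<And>s. Q True s \<Longrightarrow> \<not> complete_pos d s \<Longrightarrow>
      \<exists>i v. s i = None \<and> legal_move N d i v \<and> Q False (s(i := Some v))"
    and nora: "\<And>s i v. Q False s \<Longrightarrow> \<not> complete_pos d s \<Longrightarrow> s i = None \<Longrightarrow>
      legal_move N d i v \<Longrightarrow> Q True (s(i := Some v))"
    and "Q t s"
  shows "wanda_wins N d t s"
  using \<open>Q t s\<close>
proof (induction "card {i. i \<le> d \<and> s i = None}" arbitrary: t s rule: less_induct)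
  case less
  have fewer: "card {j. j \<le> d \<and> (s(i := Some v)) j = None} < card {j. j \<le> d \<and> s j = None}"
    if "s i = None" and "legal_move N d i v" for i v
    using that by (intro psubset_card_mono) (auto simp: legal_move_def)
  show ?case
  proof (cases "complete_pos d s")
    case True
    with less.prems show ?thesis
      by (blast intro: wanda_wins.terminal root)
  next
    case incomplete: False
    show ?thesis
    proof (cases t)
      case True
      with less.prems have "Q True s"
        by simp
      then obtain i v where move: "s i = None" "legal_move N d i v" "Q False (s(i := Some v))"
        using wanda incomplete by blast
      have "wanda_wins N d False (s(i := Some v))"
        using less.hyps[OF fewer[OF move(1,2)] move(3)] .
      with True move(1,2) show ?thesis
        by (simp add: wanda_wins_by_move)
    next
      case False
      with less.prems have "Q False s"
        by simp
      have "wanda_wins N d True (s(i := Some v))" if "s i = None" and "legal_move N d i v" for i v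
        using less.hyps[OF fewer[OF that] nora[OF \<open>Q False s\<close> incomplete that]] .
      with False incomplete show ?thesis
        by (simp add: wanda_wins.nora_move)
    qed
  qed
qed

lemma wanda_wins_if_all_completions_have_root:
  assumes "N \<ge> 2" and "\<And>s'. s \<subseteq>\<^sub>m s' \<Longrightarrow> complete_pos d s' \<Longrightarrow> has_root_mod N d s'"
  shows "wanda_wins N d t s"
proof (rule wanda_wins_by_invariant[where Q = "\<lambda>_ s'. s \<subseteq>\<^sub>m s'"])
  have extend: "s \<subseteq>\<^sub>m s'(i := Some v)" if "s \<subseteq>\<^sub>m s'" and "s' i = None" for s' i v
    using that by (force simp: map_le_def)
  show "\<exists>i v. s' i = None \<and> legal_move N d i v \<and> s \<subseteq>\<^sub>m s'(i := Some v)"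
    if le: "s \<subseteq>\<^sub>m s'" and incomplete: "\<not> complete_pos d s'" for s'
  proof -
    obtain i where "i \<le> d" and "s' i = None"
      using incomplete unfolding complete_pos_def by blast
    with le assms(1) extend show ?thesis
      unfolding legal_move_def by (intro exI[of _ i] exI[of _ 1]) auto
  qed
  show "s \<subseteq>\<^sub>m s'(i := Some v)" if "s \<subseteq>\<^sub>m s'" and "s' i = None" for s' i v
    using that extend by blast
qed (use assms(2) in auto)

definition partner :: "nat \<Rightarrow> nat \<Rightarrow> nat" where
  "partner d i = (if i = 0 then d else if i = d then 0 else if odd i then i + 1 else i - 1)"

lemma
  assumes "odd d" and "i \<le> d"
  shows partner_le: "partner d i \<le> d"
    and partner_partner: "partner d (partner d i) = i"
    and partner_neq: "partner d i \<noteq> i"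
    and odd_partner_iff: "odd (partner d i) \<longleftrightarrow> even i"
    and partner_eq_0_iff: "partner d i = 0 \<longleftrightarrow> i = d"
    and partner_eq_d_iff: "partner d i = d \<longleftrightarrow> i = 0"
  using assms unfolding partner_def by (auto elim!: oddE evenE)

definition mirrored :: "nat \<Rightarrow> (nat \<Rightarrow> int option) \<Rightarrow> bool" where
  "mirrored d s \<longleftrightarrow> (\<forall>i\<le>d. s (partner d i) = s i)"

lemma mirrored_upd_partner:
  assumes "odd d" and "i \<le> d" and "mirrored d s"
  shows "mirrored d (s(i := Some v, partner d i := Some v))"
  unfolding mirrored_def
proof (intro allI impI)
  fix j
  assume "j \<le> d"
  show "(s(i := Some v, partner d i := Some v)) (partner d j) = (s(i := Some v, partner d i := Some v)) j"
  proof (cases "j = i \<or> j = partner d i")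
    case True
    then show ?thesis
      using assms(1,2) partner_partner by auto
  next
    case False
    then have "partner d j \<noteq> i" and "partner d j \<noteq> partner d i"
      using assms(1,2) \<open>j \<le> d\<close> partner_partner by metis+
    with False \<open>j \<le> d\<close> assms(3) show ?thesis
      unfolding mirrored_def by simp
  qed
qed

lemma legal_move_partner:
  assumes "odd d" and "legal_move N d i v"
  shows "legal_move N d (partner d i) v"
  using assms partner_le partner_eq_0_iff partner_eq_d_iff unfolding legal_move_def by auto

lemma has_root_mod_if_mirrored:
  assumes "odd d" and "N > 0" and "mirrored d s"
  shows "has_root_mod N d s"
proof (rule has_root_modI[OF assms(2)])
  have "(\<Sum>i\<le>d. the (s i) * (-1) ^ i) = 0"
    by (rule alternating_sum_eq_0_if_involution[where \<sigma> = "partner d"])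
      (use assms(1,3) partner_le partner_partner odd_partner_iff in \<open>auto simp: mirrored_def\<close>)
  then show "[(\<Sum>i\<le>d. the (s i) * (-1) ^ i) = 0] (mod int N)"
    by simp
qed

definition mirrored_but_one :: "nat \<Rightarrow> nat \<Rightarrow> (nat \<Rightarrow> int option) \<Rightarrow> bool" where
  "mirrored_but_one N d s \<longleftrightarrow>
     (\<exists>s\<^sub>0 i v. mirrored d s\<^sub>0 \<and> s\<^sub>0 i = None \<and> legal_move N d i v \<and> s = s\<^sub>0(i := Some v))"

lemma not_complete_if_mirrored_but_one:
  assumes "odd d" and "mirrored_but_one N d s"
  shows "\<not> complete_pos d s"
proof -
  obtain s\<^sub>0 i v where "mirrored d s\<^sub>0" "s\<^sub>0 i = None" "legal_move N d i v" "s = s\<^sub>0(i := Some v)"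
    using assms(2) unfolding mirrored_but_one_def by blast
  moreover have "i \<le> d"
    using \<open>legal_move N d i v\<close> by (simp add: legal_move_def)
  ultimately have "partner d i \<le> d" and "s (partner d i) = None"
    using assms(1) partner_le partner_neq unfolding mirrored_def by auto
  then show ?thesis
    unfolding complete_pos_def by blast
qed

lemma mirror_move:
  assumes "odd d" and "mirrored_but_one N d s"
  shows "\<exists>j w. s j = None \<and> legal_move N d j w \<and> mirrored d (s(j := Some w))"
proof -
  obtain s\<^sub>0 i v where "mirrored d s\<^sub>0" "s\<^sub>0 i = None" "legal_move N d i v" "s = s\<^sub>0(i := Some v)"
    using assms(2) unfolding mirrored_but_one_def by blast
  moreover have "i \<le> d"
    using \<open>legal_move N d i v\<close> by (simp add: legal_move_def)
  ultimately show ?thesis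
    using assms(1) partner_neq legal_move_partner mirrored_upd_partner
    by (intro exI[of _ "partner d i"] exI[of _ v]) (auto simp: mirrored_def)
qed

lemma wanda_wins_moving_second:
  assumes "odd d" and "N > 0"
  shows "wanda_wins N d False Map.empty"
proof (rule wanda_wins_by_invariant[where Q = "\<lambda>t s. if t then mirrored_but_one N d s else mirrored d s"])
  show "has_root_mod N d s"
    if "if t then mirrored_but_one N d s else mirrored d s" and "complete_pos d s" for t s
    using that assms has_root_mod_if_mirrored not_complete_if_mirrored_but_one
    by (auto split: if_splits)
  show "if False then mirrored_but_one N d Map.empty else mirrored d Map.empty"
    by (simp add: mirrored_def)
qed (use assms(1) mirror_move in \<open>auto simp: mirrored_but_one_def\<close>)

lemma two_le_prime_power:
  assumes "prime (p::nat)" and "n > 0"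
  shows "2 \<le> p ^ n"
  using one_less_power[OF prime_gt_1_nat[OF assms(1)] assms(2)] by simp

lemma wanda_wins_if_linear_coeff_not_dvd:
  assumes "prime p" and "k \<ge> 1" and "N = p ^ (2 * k)" and "d \<ge> 1"
    and "s 0 = Some (int p ^ (2 * k - 1))" and "s 1 = Some a" and "\<not> int p ^ k dvd a"
  shows "wanda_wins N d t s"
proof (rule wanda_wins_if_all_completions_have_root)
  show "N \<ge> 2"
    using two_le_prime_power[OF assms(1), of "2 * k"] assms(2,3) by simp
  fix s'
  assume "s \<subseteq>\<^sub>m s'"
  then have "the (s' 0) = int p ^ (2 * k - 1)" and "the (s' 1) = a"
    using assms(5,6) by (metis map_le_def domI option.sel)+
  then obtain x where "[(\<Sum>i\<le>d. the (s' i) * x ^ i) = 0] (mod int p ^ (2 * k))"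
    using exists_root_if_not_dvd_linear_coeff[of "int p" k d "\<lambda>i. the (s' i)"] assms(1,2,4,7)
    by auto
  then show "has_root_mod N d s'"
    using has_root_modI[of N] assms(1,3) prime_gt_0_nat by simp
qed

lemma has_root_mod_linear:
  assumes "prime p" and "k \<ge> 1" and "N = p ^ (2 * k)"
    and "s 0 = Some (int p ^ (2 * k - 1))" and "s 1 = Some a" and "\<not> int N dvd a"
  shows "has_root_mod N 1 s"
proof -
  obtain y where "[int p ^ (2 * k - 1) + a * y = 0] (mod int p ^ (2 * k))"
    using linear_cong_prime_power_solvable[of "int p" "2 * k" a] assms(1,2,3,6) by auto
  then have "[(\<Sum>i\<le>1. the (s i) * y ^ i) = 0] (mod int N)"
    using assms(3-5) by simp
  then show ?thesis
    using has_root_modI assms(1,3) prime_gt_0_nat by simp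
qed

definition quadratic_reply :: "int \<Rightarrow> nat \<Rightarrow> int \<Rightarrow> int" where
  "quadratic_reply P k a = P * (- (1 + a div P ^ k) mod P)"

lemma
  assumes "P > 0"
  shows quadratic_reply_nonneg: "quadratic_reply P k a \<ge> 0"
    and quadratic_reply_less: "quadratic_reply P k a < P ^ 2"
  using assms by (simp_all add: quadratic_reply_def power2_eq_square)

lemma wanda_wins_after_quadratic_reply:
  assumes "prime p" and "k \<ge> 3" and "N = p ^ (2 * k)" and "d \<ge> 2"
    and "s 0 = Some (int p ^ (2 * k - 1))" and "s 1 = Some a"
    and "s 2 = Some (quadratic_reply (int p) k a)"
  shows "wanda_wins N d t s"
proof (cases "int p ^ k dvd a")
  case True
  then obtain b where b: "a = int p ^ k * b" ..
  have reply: "quadratic_reply (int p) k a = int p * (- (1 + b) mod int p)"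
    using b prime_gt_0_nat[OF assms(1)] by (simp add: quadratic_reply_def)
  show ?thesis
  proof (rule wanda_wins_if_all_completions_have_root)
    show "N \<ge> 2"
      using two_le_prime_power[OF assms(1), of "2 * k"] assms(2,3) by simp
    fix s'
    assume "s \<subseteq>\<^sub>m s'"
    then have "the (s' 0) = int p ^ (2 * k - 1)" and "the (s' 1) = int p ^ k * b"
      and "the (s' 2) = int p * (- (1 + b) mod int p)"
      using assms(5-7) b reply by (metis map_le_def domI option.sel)+
    then have "[(\<Sum>i\<le>d. the (s' i) * (int p ^ (k - 1)) ^ i) = 0] (mod int p ^ (2 * k))"
      using root_if_dvd_linear_coeff[of k d "\<lambda>i. the (s' i)" "int p" b] assms(2,4) by auto
    then show "has_root_mod N d s'"
      using has_root_modI[of N] assms(1,3) prime_gt_0_nat by simp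
  qed
next
  case False
  with assms show ?thesis
    by (intro wanda_wins_if_linear_coeff_not_dvd[where a = a]) auto
qed

lemma wanda_wins_claiming_linear_coeff:
  assumes "prime p" and "k \<ge> 1" and "N = p ^ (2 * k)" and "d \<ge> 1"
    and "s 0 = Some (int p ^ (2 * k - 1))" and "s 1 = None"
  shows "wanda_wins N d True s"
proof (rule wanda_wins_by_move[where i = 1 and v = 1])
  show "s 1 = None"
    by (fact assms(6))
  have "N \<ge> 2"
    using two_le_prime_power[OF assms(1), of "2 * k"] assms(2,3) by simp
  with assms(4) show "legal_move N d 1 1"
    by (simp add: legal_move_def)
  have "1 < int p ^ k"
    using prime_gt_1_nat[OF assms(1)] assms(2) by (intro one_less_power) auto
  then have "\<not> int p ^ k dvd 1"
    by auto
  then show "wanda_wins N d False (s(1 := Some 1))"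
    using assms by (intro wanda_wins_if_linear_coeff_not_dvd[where a = 1]) auto
qed

lemma wanda_wins_answering_linear_coeff:
  assumes "prime p" and "k \<ge> 3" and "N = p ^ (2 * k)" and "d \<ge> 3"
    and "s 0 = Some (int p ^ (2 * k - 1))" and "s 1 = Some a" and "s 2 = None"
  shows "wanda_wins N d True s"
proof (rule wanda_wins_by_move[where i = 2 and v = "quadratic_reply (int p) k a"])
  show "s 2 = None"
    by (fact assms(7))
  have "int p > 0"
    using prime_gt_0_nat[OF assms(1)] by simp
  moreover have "int p ^ 2 \<le> int p ^ (2 * k)"
    using prime_gt_1_nat[OF assms(1)] assms(2) by (intro power_increasing) auto
  ultimately show "legal_move N d 2 (quadratic_reply (int p) k a)"
    using quadratic_reply_nonneg[of "int p" k a] quadratic_reply_less[of "int p" k a] assms(3,4)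
    by (simp add: legal_move_def)
  show "wanda_wins N d False (s(2 := Some (quadratic_reply (int p) k a)))"
    using assms by (intro wanda_wins_after_quadratic_reply[where a = a]) auto
qed

lemma wanda_wins_moving_first:
  assumes "prime p" and "k \<ge> 3" and "N = p ^ (2 * k)" and "odd d"
  shows "wanda_wins N d True Map.empty"
proof -
  define M where "M = int p ^ (2 * k - 1)"
  have "0 < M" and "M < int N"
    unfolding M_def assms(3) using prime_gt_1_nat[OF assms(1)] assms(2)
    by (auto intro: power_strict_increasing)
  have "wanda_wins N d True [0 \<mapsto> M, i \<mapsto> v]" if "i \<noteq> 0" and "legal_move N d i v" for i v
  proof -
    have "i \<le> d" and "0 \<le> v" and "v < int N" and "i = d \<Longrightarrow> v \<noteq> 0"
      using \<open>legal_move N d i v\<close> by (auto simp: legal_move_def)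
    consider "d = 1" | "d \<ge> 3" and "i = 1" | "d \<ge> 3" and "i \<noteq> 1"
      using assms(4) \<open>i \<noteq> 0\<close> \<open>i \<le> d\<close> by (cases "d \<ge> 3"; cases "i = 1") (auto elim: oddE)
    then show ?thesis
    proof cases
      case 1
      then have "i = 1" and "\<not> int N dvd v"
        using \<open>i \<noteq> 0\<close> \<open>i \<le> d\<close> \<open>i = d \<Longrightarrow> v \<noteq> 0\<close> \<open>0 \<le> v\<close> \<open>v < int N\<close> zdvd_not_zless
        by fastforce+
      then have "has_root_mod N d [0 \<mapsto> M, i \<mapsto> v]"
        using has_root_mod_linear[OF assms(1) _ assms(3)] assms(2) 1 by (simp add: M_def)
      moreover have "complete_pos d [0 \<mapsto> M, i \<mapsto> v]"
        using 1 \<open>i = 1\<close> by (auto simp: complete_pos_def)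
      ultimately show ?thesis
        by (blast intro: wanda_wins.terminal)
    next
      case 2
      then show ?thesis
        using assms(1-3) by (intro wanda_wins_answering_linear_coeff[where a = v]) (auto simp: M_def)
    next
      case 3
      then show ?thesis
        using assms(1-3) \<open>i \<noteq> 0\<close> by (intro wanda_wins_claiming_linear_coeff) (auto simp: M_def)
    qed
  qed
  then have "wanda_wins N d False [0 \<mapsto> M]"
    using odd_pos[OF assms(4)]
    by (intro wanda_wins.nora_move) (auto simp: complete_pos_def split: if_splits)
  moreover have "legal_move N d 0 M"
    using \<open>0 < M\<close> \<open>M < int N\<close> by (simp add: legal_move_def)
  ultimately show ?thesis
    by (intro wanda_wins_by_move[where i = 0 and v = M]) simp_all
qed

theorem lemma7:
  fixes p k d N :: nat
  assumes "prime p" and "k \<ge> 3" and "N = p ^ (2 * k)" and "odd d"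
  shows "wanda_wins N d True (\<lambda>_. None) \<and> wanda_wins N d False (\<lambda>_. None)"
proof
  show "wanda_wins N d True (\<lambda>_. None)"
    by (rule wanda_wins_moving_first[OF assms])
  show "wanda_wins N d False (\<lambda>_. None)"
    using assms(1,3) prime_gt_0_nat by (intro wanda_wins_moving_second[OF assms(4)]) simp
qed

end
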